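(* Let $\mu$ be a probability measure on $\{0,1\}^{\mathbb{N}}$, $X\sim\mu$, and for $i,j\in\mathbb{N}$ let $p_i=\mathbb{E}[X_i]$ and $r_{ij}=\mathbb{E}[X_iX_j]$. Then for all $i,j\in\mathbb{N}$ and all $t\ge0$, $$\mathbb{E}\exp\left\{t\left[(X_i-p_i)-(X_j-p_j)\right]\right\}\le\exp\left(\frac{t^2}{\log\frac{2}{p_i+p_j-2r_{ij}}}\right).$$
   Context: When $p_i+p_j-2r_{ij}=0$, the right-hand side is interpreted as $\exp(0)=1$. *)

theory Defs
  imports "HOL-Probability.Probability"
begin

text \<open>The measurable space {0,1}^N with its product sigma-algebra; a point is
  a function nat => bool and the coordinate X_i(w) is of_bool (w i).\<close>

definition cube :: "(nat \<Rightarrow> bool) measure" where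
  "cube = PiM UNIV (\<lambda>_. count_space UNIV)"

end

theory Submission
  imports Defs
begin

text \<open>Put \<open>D = X\<^sub>i - X\<^sub>j\<close>. It takes the values \<open>1\<close> and \<open>-1\<close> with probabilities
  \<open>a = P(X\<^sub>i = 1, X\<^sub>j = 0)\<close> and \<open>b = P(X\<^sub>i = 0, X\<^sub>j = 1)\<close>, and is \<open>0\<close> otherwise; moreover
  \<open>p\<^sub>i + p\<^sub>j - 2 r\<^sub>i\<^sub>j = E D\<^sup>2 = a + b\<close>. So the left-hand side is an explicit function of
  \<open>a\<close>, \<open>b\<close>, \<open>t\<close>, and we write \<open>L = ln (2 / (a + b))\<close>.
  If \<open>L < 2\<close>, Hoeffding's lemma for \<open>D \<in> [-1, 1]\<close> already gives \<open>exp (t\<^sup>2 / 2)\<close>.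
  If \<open>L \<ge> 2\<close> and \<open>t \<le> L\<close>, the bounds \<open>1 + x \<le> exp x\<close> and \<open>t \<le> sinh t\<close> reduce the claim to
  \<open>(a + b) (exp t - 1 - t) \<le> t\<^sup>2 / L\<close>, which follows from the monotonicity of
  \<open>(exp t - 1 - t) / t\<^sup>2\<close> and \<open>(a + b) exp L = 2\<close>. If \<open>t > L\<close>, crude estimates give the bound
  \<open>exp (2 t - L)\<close>, and \<open>2 t - L \<le> t\<^sup>2 / L\<close>.\<close>

lemma sinh_real_ge_self:
  fixes x :: real
  assumes "0 \<le> x"
  shows "x \<le> sinh x"
proof -
  have "sinh 0 - 0 \<le> sinh x - x"
  proof (rule DERIV_nonneg_imp_nondecreasing[OF assms])
    fix y :: real
    show "\<exists>d. ((\<lambda>x. sinh x - x) has_real_derivative d) (at y) \<and> 0 \<le> d"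
      using cosh_real_ge_1[of y] by (intro exI[of _ "cosh y - 1"]) (auto intro!: derivative_eq_intros)
  qed
  then show ?thesis by simp
qed

lemma exp_minus_two_mult_plus_nonneg:
  fixes x :: real
  assumes "0 \<le> x"
  shows "0 \<le> (x - 2) * exp x + x + 2"
proof -
  have "(0 - 2) * exp 0 + 0 + 2 \<le> (x - 2) * exp x + x + (2::real)"
  proof (rule DERIV_nonneg_imp_nondecreasing[OF assms])
    fix y :: real
    have "1 - y \<le> exp (- y)"
      using exp_ge_add_one_self[of "- y"] by simp
    then have "0 \<le> (y - 1) * exp y + 1"
      using mult_right_mono[of "1 - y" "exp (- y)" "exp y"] by (simp add: exp_minus field_simps)
    then show "\<exists>d. ((\<lambda>x. (x - 2) * exp x + x + 2) has_real_derivative d) (at y) \<and> 0 \<le> d"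
      by (intro exI[of _ "(y - 1) * exp y + 1"]) (auto intro!: derivative_eq_intros simp: algebra_simps)
  qed
  then show ?thesis by simp
qed

lemma exp_remainder_div_square_mono:
  fixes s x :: real
  assumes "0 < s" "s \<le> x"
  shows "(exp s - 1 - s) / s\<^sup>2 \<le> (exp x - 1 - x) / x\<^sup>2"
proof (rule DERIV_nonneg_imp_nondecreasing[OF assms(2)])
  fix y :: real
  assume "s \<le> y"
  with assms have "0 < y" by simp
  have "((\<lambda>x. (exp x - 1 - x) / x\<^sup>2) has_real_derivative ((y - 2) * exp y + y + 2) / y ^ 3) (at y)"
    using \<open>0 < y\<close> by (auto intro!: derivative_eq_intros simp: field_simps power2_eq_square power3_eq_cube)
  moreover have "0 \<le> ((y - 2) * exp y + y + 2) / y ^ 3"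
    using exp_minus_two_mult_plus_nonneg[of y] \<open>0 < y\<close> by simp
  ultimately show "\<exists>d. ((\<lambda>x. (exp x - 1 - x) / x\<^sup>2) has_real_derivative d) (at y) \<and> 0 \<le> d"
    by blast
qed

text \<open>The moment generating function of \<open>D - E D\<close> for a random variable \<open>D\<close> with
  \<open>P(D = 1) = a\<close>, \<open>P(D = -1) = b\<close> and \<open>P(D = 0) = 1 - a - b\<close>.\<close>

definition centered_ternary_mgf :: "real \<Rightarrow> real \<Rightarrow> real \<Rightarrow> real" where
  "centered_ternary_mgf a b t = exp (- t * (a - b)) * (1 + a * (exp t - 1) + b * (exp (- t) - 1))"

lemma centered_ternary_mgf_le_exp:
  fixes a b t :: real
  assumes "0 \<le> a" "0 \<le> b" "0 \<le> t"
  shows "centered_ternary_mgf a b t \<le> exp ((a + b) * (exp t - 1 - t))"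
proof -
  have "exp (- t) - 1 + t \<le> exp t - 1 - t"
    using sinh_real_ge_self[OF assms(3)] by (simp add: sinh_def)
  then have "b * (exp (- t) - 1 + t) \<le> b * (exp t - 1 - t)"
    using assms(2) by (rule mult_left_mono)
  then have exponent_le: "a * (exp t - 1 - t) + b * (exp (- t) - 1 + t) \<le> (a + b) * (exp t - 1 - t)"
    by (simp add: algebra_simps)
  have "1 + a * (exp t - 1) + b * (exp (- t) - 1) \<le> exp (a * (exp t - 1) + b * (exp (- t) - 1))"
    using exp_ge_add_one_self by (simp add: add.assoc)
  then have "centered_ternary_mgf a b t \<le> exp (- t * (a - b)) * exp (a * (exp t - 1) + b * (exp (- t) - 1))"
    unfolding centered_ternary_mgf_def by (rule mult_left_mono) simp
  also have "\<dots> = exp (a * (exp t - 1 - t) + b * (exp (- t) - 1 + t))"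
    by (simp flip: exp_add add: algebra_simps)
  also have "\<dots> \<le> exp ((a + b) * (exp t - 1 - t))"
    using exponent_le by simp
  finally show ?thesis .
qed

lemma exp_remainder_le_square_div_ln:
  fixes q t :: real
  assumes "0 < q" "2 \<le> ln (2 / q)" "0 \<le> t" "t \<le> ln (2 / q)"
  shows "q * (exp t - 1 - t) \<le> t\<^sup>2 / ln (2 / q)"
proof (cases "t = 0")
  case False
  define L where "L = ln (2 / q)"
  have "0 < t" "t \<le> L" "2 \<le> L"
    using False assms unfolding L_def by simp_all
  have "q * (exp L - 1 - L) = 2 - q - q * L"
    using \<open>0 < q\<close> by (simp add: L_def field_simps)
  also have "\<dots> \<le> L"
    using \<open>2 \<le> L\<close> \<open>0 < q\<close> mult_nonneg_nonneg[of q L] by linarith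
  finally have at_L: "q * (exp L - 1 - L) \<le> L" .
  have "exp t - 1 - t \<le> t\<^sup>2 * ((exp L - 1 - L) / L\<^sup>2)"
    using exp_remainder_div_square_mono[OF \<open>0 < t\<close> \<open>t \<le> L\<close>] \<open>0 < t\<close> by (simp add: field_simps)
  then have "q * (exp t - 1 - t) \<le> t\<^sup>2 * (q * (exp L - 1 - L)) / L\<^sup>2"
    using mult_left_mono[OF _ less_imp_le[OF \<open>0 < q\<close>]] by (fastforce simp: algebra_simps)
  also have "\<dots> \<le> t\<^sup>2 * L / L\<^sup>2"
    using at_L by (intro divide_right_mono mult_left_mono) auto
  also have "\<dots> = t\<^sup>2 / L"
    using \<open>2 \<le> L\<close> by (simp add: power2_eq_square)
  finally show ?thesis
    unfolding L_def .
qed simp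

lemma le_of_two_le_ln_two_div:
  fixes q :: real
  assumes "0 < q" "2 \<le> ln (2 / q)"
  shows "q \<le> 8 / 25"
proof -
  have "5 / 2 \<le> exp (1::real)"
    using exp_lower_Taylor_quadratic[of 1] by simp
  then have "5 / 2 * (5 / 2) \<le> exp (1::real) * exp 1"
    using mult_mono by fastforce
  also have "\<dots> = exp 2"
    by (simp flip: exp_add)
  also have "\<dots> \<le> 2 / q"
    using assms by (metis exp_le_cancel_iff exp_ln zero_less_divide_iff zero_less_numeral)
  finally show ?thesis
    using \<open>0 < q\<close> by (simp add: field_simps)
qed

lemma centered_ternary_mgf_le_crude:
  fixes a b t :: real
  assumes "0 \<le> a" "0 \<le> b" "a + b \<le> 1" "0 \<le> t"
  shows "centered_ternary_mgf a b t \<le> exp (t * (a + b)) * (1 + (a + b) * exp t)"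
proof -
  have "0 \<le> a * exp t" "0 \<le> b * exp t" "0 \<le> b * exp (- t)" "b * exp (- t) \<le> b"
    using assms by (simp_all add: mult_left_le)
  moreover have "1 + a * (exp t - 1) + b * (exp (- t) - 1) = 1 - (a + b) + a * exp t + b * exp (- t)"
    and "(a + b) * exp t = a * exp t + b * exp t"
    by (simp_all add: algebra_simps)
  ultimately have "0 \<le> 1 + a * (exp t - 1) + b * (exp (- t) - 1)"
    and "1 + a * (exp t - 1) + b * (exp (- t) - 1) \<le> 1 + (a + b) * exp t"
    using assms by linarith+
  moreover have "exp (- t * (a - b)) \<le> exp (t * (a + b))"
    using assms by (simp add: algebra_simps)
  ultimately show ?thesis
    unfolding centered_ternary_mgf_def by (intro mult_mono) auto
qed

lemma centered_ternary_mgf_le_large_t: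
  fixes a b t :: real
  assumes "0 \<le> a" "0 \<le> b" "0 < a + b" "2 \<le> ln (2 / (a + b))" "ln (2 / (a + b)) < t"
  shows "centered_ternary_mgf a b t \<le> exp (2 * t - ln (2 / (a + b)))"
proof -
  define q where "q = a + b"
  define L where "L = ln (2 / q)"
  have "0 < q" "2 \<le> L" "L < t"
    using assms unfolding q_def L_def by simp_all
  have "q \<le> 8 / 25"
    using \<open>0 < q\<close> \<open>2 \<le> L\<close> unfolding L_def by (rule le_of_two_le_ln_two_div)
  have "q * exp t = 2 * exp (t - L)"
    using \<open>0 < q\<close> by (simp add: L_def exp_diff field_simps)
  moreover have "1 \<le> exp (t - L)"
    using \<open>L < t\<close> by simp
  ultimately have le3: "1 + q * exp t \<le> 3 * exp (t - L)"
    by linarith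
  have three: "3 \<le> exp (t * (1 - q))"
  proof -
    have "34 / 25 \<le> t * (1 - q)"
      using \<open>2 \<le> L\<close> \<open>L < t\<close> \<open>q \<le> 8 / 25\<close> by (intro order.trans[OF _ mult_mono[of 2 t "17 / 25"]]) auto
    moreover have "3 \<le> exp (34 / 25 :: real)"
      using exp_lower_Taylor_quadratic[of "34 / 25"] by (simp add: power2_eq_square)
    ultimately show ?thesis
      by (meson exp_le_cancel_iff order.trans)
  qed
  have "centered_ternary_mgf a b t \<le> exp (t * q) * (1 + q * exp t)"
    using assms \<open>q \<le> 8 / 25\<close> unfolding q_def by (intro centered_ternary_mgf_le_crude) auto
  also have "\<dots> \<le> exp (t * q) * (exp (t * (1 - q)) * exp (t - L))"
    using order.trans[OF le3 mult_right_mono[OF three exp_ge_zero]] by simp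
  also have "\<dots> = exp (2 * t - L)"
    by (simp flip: exp_add add: algebra_simps)
  finally show ?thesis
    unfolding L_def q_def .
qed

lemma centered_ternary_mgf_le:
  fixes a b t :: real
  assumes "0 \<le> a" "0 \<le> b" "0 < a + b" and L: "2 \<le> ln (2 / (a + b))" and "0 \<le> t"
  shows "centered_ternary_mgf a b t \<le> exp (t\<^sup>2 / ln (2 / (a + b)))"
proof (cases "t \<le> ln (2 / (a + b))")
  case True
  have "centered_ternary_mgf a b t \<le> exp ((a + b) * (exp t - 1 - t))"
    using assms by (intro centered_ternary_mgf_le_exp)
  also have "\<dots> \<le> exp (t\<^sup>2 / ln (2 / (a + b)))"
    using exp_remainder_le_square_div_ln[OF \<open>0 < a + b\<close> L \<open>0 \<le> t\<close> True] by simp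
  finally show ?thesis .
next
  case False
  have "centered_ternary_mgf a b t \<le> exp (2 * t - ln (2 / (a + b)))"
    using False by (intro centered_ternary_mgf_le_large_t assms) simp
  also have "\<dots> \<le> exp (t\<^sup>2 / ln (2 / (a + b)))"
  proof -
    have "0 \<le> (t - ln (2 / (a + b)))\<^sup>2"
      by simp
    then show ?thesis
      using L by (simp add: field_simps power2_eq_square)
  qed
  finally show ?thesis .
qed

lemma (in interval_bounded_random_variable) Hoeffdings_lemma_integral:
  assumes "0 \<le> l"
  shows "expectation (\<lambda>x. exp (l * (f x - expectation f))) \<le> exp (l\<^sup>2 * (b - a)\<^sup>2 / 8)"
proof (cases "l = 0")
  case True
  then show ?thesis
    by (simp add: prob_space)
next
  case False
  with assms have "0 < l"
    by simp
  have "expectation (\<lambda>x. exp (l * (f x - expectation f)))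
      = enn2real (\<integral>\<^sup>+ x. ennreal (exp (l * (f x - expectation f))) \<partial>M)"
    by (rule integral_eq_nn_integral) auto
  also have "\<dots> \<le> enn2real (ennreal (exp (l\<^sup>2 * (b - a)\<^sup>2 / 8)))"
    using Hoeffdings_lemma_nn_integral[OF \<open>0 < l\<close>] by (rule enn2real_mono) simp
  finally show ?thesis
    by simp
qed

context prob_space
begin

lemma integrable_of_bool:
  assumes [measurable]: "Measurable.pred M P"
  shows "integrable M (\<lambda>\<omega>. of_bool (P \<omega>) :: real)"
  by (rule integrable_const_bound[of _ 1]) auto

lemma expectation_of_bool_split:
  assumes [measurable]: "Measurable.pred M P" "Measurable.pred M Q"
  shows "expectation (\<lambda>\<omega>. of_bool (P \<omega>) :: real)
    = expectation (\<lambda>\<omega>. of_bool (P \<omega> \<and> Q \<omega>)) + expectation (\<lambda>\<omega>. of_bool (P \<omega> \<and> \<not> Q \<omega>))"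
proof -
  have "expectation (\<lambda>\<omega>. of_bool (P \<omega>) :: real)
      = expectation (\<lambda>\<omega>. of_bool (P \<omega> \<and> Q \<omega>) + of_bool (P \<omega> \<and> \<not> Q \<omega>))"
    by (rule Bochner_Integration.integral_cong) auto
  also have "\<dots> = expectation (\<lambda>\<omega>. of_bool (P \<omega> \<and> Q \<omega>)) + expectation (\<lambda>\<omega>. of_bool (P \<omega> \<and> \<not> Q \<omega>))"
    by (intro Bochner_Integration.integral_add integrable_of_bool) auto
  finally show ?thesis .
qed

lemma expectation_exp_centered_indicator_diff:
  fixes P Q :: "'a \<Rightarrow> bool" and t :: real
  assumes [measurable]: "Measurable.pred M P" "Measurable.pred M Q"
  shows "expectation (\<lambda>\<omega>. exp (t * ((of_bool (P \<omega>) - expectation (\<lambda>\<omega>. of_bool (P \<omega>)))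
                                   - (of_bool (Q \<omega>) - expectation (\<lambda>\<omega>. of_bool (Q \<omega>))))))
    = centered_ternary_mgf (expectation (\<lambda>\<omega>. of_bool (P \<omega> \<and> \<not> Q \<omega>)))
        (expectation (\<lambda>\<omega>. of_bool (\<not> P \<omega> \<and> Q \<omega>))) t"
proof -
  define a where "a = expectation (\<lambda>\<omega>. of_bool (P \<omega> \<and> \<not> Q \<omega>) :: real)"
  define b where "b = expectation (\<lambda>\<omega>. of_bool (\<not> P \<omega> \<and> Q \<omega>) :: real)"
  define r where "r = expectation (\<lambda>\<omega>. of_bool (P \<omega> \<and> Q \<omega>) :: real)"
  have EP: "expectation (\<lambda>\<omega>. of_bool (P \<omega>)) = r + a"
    unfolding r_def a_def by (rule expectation_of_bool_split) measurable
  have EQ: "expectation (\<lambda>\<omega>. of_bool (Q \<omega>)) = r + b"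
    using expectation_of_bool_split[of Q P] unfolding r_def b_def by (simp add: conj_commute)
  have "exp (t * ((of_bool (P \<omega>) - (r + a)) - (of_bool (Q \<omega>) - (r + b))))
      = exp (- t * (a - b)) * (1 + of_bool (P \<omega> \<and> \<not> Q \<omega>) * (exp t - 1) + of_bool (\<not> P \<omega> \<and> Q \<omega>) * (exp (- t) - 1))"
    for \<omega>
    by (cases "P \<omega>"; cases "Q \<omega>") (simp_all add: algebra_simps flip: exp_add)
  then show ?thesis
    unfolding EP EQ centered_ternary_mgf_def a_def b_def
    by (simp add: integrable_of_bool prob_space)
qed

lemma expectation_exp_centered_indicator_diff_le_Hoeffding:
  fixes P Q :: "'a \<Rightarrow> bool" and t :: real
  assumes [measurable]: "Measurable.pred M P" "Measurable.pred M Q" and "0 \<le> t"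
  shows "expectation (\<lambda>\<omega>. exp (t * ((of_bool (P \<omega>) - expectation (\<lambda>\<omega>. of_bool (P \<omega>)))
                                   - (of_bool (Q \<omega>) - expectation (\<lambda>\<omega>. of_bool (Q \<omega>))))))
    \<le> exp (t\<^sup>2 / 2)"
proof -
  interpret D: interval_bounded_random_variable M "\<lambda>\<omega>. of_bool (P \<omega>) - of_bool (Q \<omega>) :: real" "- 1" 1
    by unfold_locales auto
  have "expectation (\<lambda>\<omega>. exp (t * ((of_bool (P \<omega>) - expectation (\<lambda>\<omega>. of_bool (P \<omega>)))
                                   - (of_bool (Q \<omega>) - expectation (\<lambda>\<omega>. of_bool (Q \<omega>))))))
      = expectation (\<lambda>\<omega>. exp (t * ((of_bool (P \<omega>) - of_bool (Q \<omega>))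
                                   - expectation (\<lambda>\<omega>. of_bool (P \<omega>) - of_bool (Q \<omega>)))))"
    by (simp add: Bochner_Integration.integral_diff integrable_of_bool algebra_simps)
  also have "\<dots> \<le> exp (t\<^sup>2 / 2)"
    using D.Hoeffdings_lemma_integral[OF \<open>0 \<le> t\<close>] by simp
  finally show ?thesis .
qed

lemma expectation_indicator_diff_square:
  assumes [measurable]: "Measurable.pred M P" "Measurable.pred M Q"
  shows "expectation (\<lambda>\<omega>. of_bool (P \<omega>)) + expectation (\<lambda>\<omega>. of_bool (Q \<omega>))
           - 2 * expectation (\<lambda>\<omega>. of_bool (P \<omega>) * of_bool (Q \<omega>))
         = expectation (\<lambda>\<omega>. of_bool (P \<omega> \<and> \<not> Q \<omega>)) + expectation (\<lambda>\<omega>. of_bool (\<not> P \<omega> \<and> Q \<omega>) :: real)"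
proof -
  have "expectation (\<lambda>\<omega>. of_bool (P \<omega>) * of_bool (Q \<omega>)) = expectation (\<lambda>\<omega>. of_bool (P \<omega> \<and> Q \<omega>) :: real)"
    by (rule Bochner_Integration.integral_cong) auto
  then show ?thesis
    using expectation_of_bool_split[of P Q] expectation_of_bool_split[of Q P] by (simp add: conj_commute)
qed

lemma expectation_of_bool_le_1:
  assumes [measurable]: "Measurable.pred M P"
  shows "expectation (\<lambda>\<omega>. of_bool (P \<omega>)) \<le> (1 :: real)"
proof -
  have "expectation (\<lambda>\<omega>. of_bool (P \<omega>)) \<le> expectation (\<lambda>\<omega>. 1 :: real)"
    by (intro integral_mono integrable_of_bool) auto
  then show ?thesis
    by (simp add: prob_space)
qed

lemma expectation_exp_centered_indicator_diff_le:
  fixes P Q :: "'a \<Rightarrow> bool" and t :: real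
  assumes [measurable]: "Measurable.pred M P" "Measurable.pred M Q" and "0 \<le> t"
  shows "expectation (\<lambda>\<omega>. exp (t * ((of_bool (P \<omega>) - expectation (\<lambda>\<omega>. of_bool (P \<omega>)))
                                   - (of_bool (Q \<omega>) - expectation (\<lambda>\<omega>. of_bool (Q \<omega>))))))
    \<le> exp (t\<^sup>2 / ln (2 / (expectation (\<lambda>\<omega>. of_bool (P \<omega>)) + expectation (\<lambda>\<omega>. of_bool (Q \<omega>))
                          - 2 * expectation (\<lambda>\<omega>. of_bool (P \<omega>) * of_bool (Q \<omega>)))))"
    (is "?mgf \<le> exp (t\<^sup>2 / ln (2 / ?var))")
proof -
  define a where "a = expectation (\<lambda>\<omega>. of_bool (P \<omega> \<and> \<not> Q \<omega>) :: real)"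
  define b where "b = expectation (\<lambda>\<omega>. of_bool (\<not> P \<omega> \<and> Q \<omega>) :: real)"
  have mgf: "?mgf = centered_ternary_mgf a b t"
    unfolding a_def b_def by (rule expectation_exp_centered_indicator_diff) measurable
  have var: "?var = a + b"
    unfolding a_def b_def by (rule expectation_indicator_diff_square) measurable
  have "0 \<le> a" "0 \<le> b"
    unfolding a_def b_def by simp_all
  have "a + b = expectation (\<lambda>\<omega>. of_bool (P \<omega> \<and> \<not> Q \<omega>) + of_bool (\<not> P \<omega> \<and> Q \<omega>))"
    unfolding a_def b_def by (intro Bochner_Integration.integral_add[symmetric] integrable_of_bool) auto
  also have "\<dots> = expectation (\<lambda>\<omega>. of_bool (P \<omega> \<noteq> Q \<omega>))"
    by (rule Bochner_Integration.integral_cong) auto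
  also have "\<dots> \<le> 1"
    by (rule expectation_of_bool_le_1) measurable
  finally have "a + b \<le> 1" .
  consider "a + b = 0" | "0 < a + b" "2 \<le> ln (2 / (a + b))" | "0 < a + b" "ln (2 / (a + b)) < 2"
    using \<open>0 \<le> a\<close> \<open>0 \<le> b\<close> by fastforce
  then show ?thesis
  proof cases
    case 1
    text \<open>In Isabelle \<open>ln (2 / 0) = ln 0 = 0\<close> and \<open>t\<^sup>2 / 0 = 0\<close>, so the right-hand side is \<open>1\<close>,
      as the convention for a vanishing denominator demands.\<close>
    then have "a = 0" "b = 0"
      using \<open>0 \<le> a\<close> \<open>0 \<le> b\<close> by simp_all
    then show ?thesis
      unfolding mgf var by (simp add: centered_ternary_mgf_def)
  next
    case 2
    show ?thesis
      unfolding mgf var using centered_ternary_mgf_le[OF \<open>0 \<le> a\<close> \<open>0 \<le> b\<close> 2 \<open>0 \<le> t\<close>] .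
  next
    case 3
    then have "t\<^sup>2 / 2 \<le> t\<^sup>2 / ln (2 / (a + b))"
      using \<open>a + b \<le> 1\<close> by (intro divide_left_mono) auto
    then have "exp (t\<^sup>2 / 2) \<le> exp (t\<^sup>2 / ln (2 / (a + b)))"
      by simp
    with expectation_exp_centered_indicator_diff_le_Hoeffding[OF assms] show ?thesis
      unfolding var by (rule order.trans)
  qed
qed

end

theorem lemma17:
  fixes \<mu> :: "(nat \<Rightarrow> bool) measure" and i j :: nat and t :: real
  assumes "prob_space \<mu>"
    and "sets \<mu> = sets cube"
    and "t \<ge> 0"
  shows "(let X = (\<lambda>k \<omega>. of_bool (\<omega> k) :: real);
              p = (\<lambda>k. \<integral>\<omega>. X k \<omega> \<partial>\<mu>);
              r = (\<integral>\<omega>. X i \<omega> * X j \<omega> \<partial>\<mu>)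
          in (\<integral>\<omega>. exp (t * ((X i \<omega> - p i) - (X j \<omega> - p j))) \<partial>\<mu>)
             \<le> exp (t\<^sup>2 / ln (2 / (p i + p j - 2 * r))))"
proof -
  interpret prob_space \<mu>
    by fact
  have coordinate: "Measurable.pred \<mu> (\<lambda>\<omega>. \<omega> k)" for k
    unfolding measurable_cong_sets[OF assms(2) refl] cube_def
    by (rule measurable_component_singleton) simp
  show ?thesis
    unfolding Let_def
    by (rule expectation_exp_centered_indicator_diff_le[OF coordinate coordinate assms(3)])
qed

end
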